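(* Let $X$ be a Tychonoff space. The following are equivalent: (1) $(C(X),\tau_\Gamma)$ is second countable; (2) $(C(X),\tau_\Gamma)$ has a countable network; (3) $(C(X),\tau_\Gamma)$ is separable; (4) $(C(X),\tau_\Gamma)$ has the countable chain condition; (5) $X$ is compact and metrizable.
   Context: $C(X)$ is the set of continuous real-valued functions on $X$, each identified with its graph in $X\times\mathbb{R}$. The graph topology $\tau_\Gamma$ on $C(X)$ has base $\{F_G: G\text{ open in }X\times\mathbb{R}\}$ where $F_G=\{f\in C(X): f\subset G\}$. *)

theory Defs
  imports "HOL-Analysis.Analysis"
begin

definition tychonoff_space :: "'a topology \<Rightarrow> bool" where
  "tychonoff_space X \<equiv> completely_regular_space X \<and> t1_space X"

definition fgraph :: "'a topology \<Rightarrow> ('a \<Rightarrow> real) \<Rightarrow> ('a \<times> real) set" where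
  "fgraph X f = {(x, f x) | x. x \<in> topspace X}"

text \<open>C(X): continuous real-valued functions on X, identified with their graphs.\<close>
definition CX :: "'a topology \<Rightarrow> ('a \<times> real) set set" where
  "CX X = {fgraph X f | f. continuous_map X euclideanreal f}"

definition FG :: "'a topology \<Rightarrow> ('a \<times> real) set \<Rightarrow> ('a \<times> real) set set" where
  "FG X G = {g \<in> CX X. g \<subseteq> G}"

definition graph_topology :: "'a topology \<Rightarrow> ('a \<times> real) set topology" where
  "graph_topology X =
     topology_generated_by {FG X G | G. openin (prod_topology X euclideanreal) G}"

definition has_countable_network :: "'a topology \<Rightarrow> bool" where
  "has_countable_network T \<equiv>
     \<exists>\<N>. countable \<N> \<and> (\<forall>N\<in>\<N>. N \<subseteq> topspace T) \<and>
         (\<forall>U x. openin T U \<and> x \<in> U \<longrightarrow> (\<exists>N\<in>\<N>. x \<in> N \<and> N \<subseteq> U))"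

definition ccc_space :: "'a topology \<Rightarrow> bool" where
  "ccc_space T \<equiv>
     \<forall>\<U>. (\<forall>U\<in>\<U>. openin T U \<and> U \<noteq> {}) \<and> pairwise disjnt \<U> \<longrightarrow> countable \<U>"

end

theory Submission
  imports Defs
begin

text \<open>
  The chain  second countable \<Longrightarrow> countable network \<Longrightarrow> separable \<Longrightarrow> ccc  holds in every
  topological space, so it suffices to prove two implications for the graph topology:

  (a) If X is compact and metrizable, the graph topology is second countable.  Indeed
      X \<times> \<real> has a countable base; the graph of a continuous f is compact, so it lies in a
      finite union of basic open sets inside any open G \<supseteq> f.  Hence the sets F_G with G a
      finite union of basic sets form a countable base of the graph topology.

  (b) If the graph topology is ccc, then X is compact and metrizable.  Open tubes of radius
      c/2 around graphs show that every family of continuous functions that is c-separated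
      in the sup distance is countable.  A maximal (1/2)-separated family M is therefore
      countable and (1/2)-dense; by complete regularity it separates points from closed sets,
      so evaluation at M embeds X into the metrizable space \<real>^M.  Finally, a non-compact
      metrizable X contains an infinite closed discrete set, and Tietze extensions of its
      indicator functions form an uncountable 1-separated family.
\<close>


section \<open>General topology\<close>

lemma second_countable_imp_countable_network:
  "second_countable T \<Longrightarrow> has_countable_network T"
  unfolding second_countable_def has_countable_network_def using openin_subset by metis

lemma countable_network_imp_separable:
  assumes "has_countable_network T"
  shows "separable_space T"
proof -
  obtain \<N> where \<N>: "countable \<N>" "\<forall>N\<in>\<N>. N \<subseteq> topspace T"
    "\<forall>U x. openin T U \<and> x \<in> U \<longrightarrow> (\<exists>N\<in>\<N>. x \<in> N \<and> N \<subseteq> U)"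
    using assms unfolding has_countable_network_def by blast
  define C where "C = (\<lambda>N. SOME x. x \<in> N) ` {N \<in> \<N>. N \<noteq> {}}"
  have "countable C"
    unfolding C_def using \<N>(1) by auto
  moreover have "C \<subseteq> topspace T"
    unfolding C_def using \<N>(2) some_in_eq by blast
  moreover have "topspace T \<subseteq> T closure_of C"
  proof
    fix x assume x: "x \<in> topspace T"
    show "x \<in> T closure_of C"
      unfolding in_closure_of
    proof (intro conjI allI impI)
      fix U assume "x \<in> U \<and> openin T U"
      then obtain N where "N \<in> \<N>" "x \<in> N" "N \<subseteq> U"
        using \<N>(3) by blast
      moreover have "(SOME y. y \<in> N) \<in> N"
        using \<open>x \<in> N\<close> by (rule someI)
      ultimately show "\<exists>y. y \<in> C \<and> y \<in> U"
        unfolding C_def by blast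
    qed (rule x)
  qed
  ultimately show ?thesis
    unfolding separable_space_def by (metis closure_of_subset_topspace subset_antisym)
qed

lemma separable_imp_ccc:
  assumes "separable_space T"
  shows "ccc_space T"
  unfolding ccc_space_def
proof (intro allI impI)
  fix \<U> assume \<U>: "(\<forall>U\<in>\<U>. openin T U \<and> U \<noteq> {}) \<and> pairwise disjnt \<U>"
  obtain C where C: "countable C" "T closure_of C = topspace T"
    using assms unfolding separable_space_def by blast
  text \<open>Every member of the family meets the dense set C; disjointness makes the choice injective.\<close>
  have "\<exists>c. c \<in> C \<and> c \<in> U" if U_in: "U \<in> \<U>" for U
  proof -
    obtain x where x: "x \<in> U" and U: "openin T U"
      using \<U> U_in by blast
    then have "x \<in> T closure_of C"
      using C(2) openin_subset by blast
    then show ?thesis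
      using x U unfolding in_closure_of by blast
  qed
  then obtain c where c: "\<And>U. U \<in> \<U> \<Longrightarrow> c U \<in> C \<and> c U \<in> U"
    by metis
  have "inj_on c \<U>"
  proof (rule inj_onI, rule ccontr)
    fix U V assume "U \<in> \<U>" "V \<in> \<U>" "c U = c V" "U \<noteq> V"
    then show False
      using \<U> c[of U] c[of V] unfolding pairwise_def disjnt_def by auto
  qed
  moreover have "countable (c ` \<U>)"
    using c C(1) by (auto intro: countable_subset)
  ultimately show "countable \<U>"
    using countable_image_inj_on by blast
qed

lemma second_countable_euclidean:
  "second_countable (euclidean :: 'a::second_countable_topology topology)"
proof -
  obtain \<B> :: "'a set set" where "countable \<B>" "topological_basis \<B>"
    using ex_countable_basis by blast
  then show ?thesis
    unfolding second_countable_def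
    by (metis open_openin topological_basisE topological_basis_open)
qed

lemma second_countable_prod_topology:
  assumes "second_countable X" "second_countable Y"
  shows "second_countable (prod_topology X Y)"
proof -
  obtain \<B> where \<B>: "countable \<B>" "\<And>V. V \<in> \<B> \<Longrightarrow> openin X V"
    "\<And>U x. openin X U \<Longrightarrow> x \<in> U \<Longrightarrow> \<exists>V\<in>\<B>. x \<in> V \<and> V \<subseteq> U"
    using assms(1) unfolding second_countable_def by metis
  obtain \<C> where \<C>: "countable \<C>" "\<And>V. V \<in> \<C> \<Longrightarrow> openin Y V"
    "\<And>U y. openin Y U \<Longrightarrow> y \<in> U \<Longrightarrow> \<exists>V\<in>\<C>. y \<in> V \<and> V \<subseteq> U"
    using assms(2) unfolding second_countable_def by metis
  define \<D> where "\<D> = (\<lambda>(U, V). U \<times> V) ` (\<B> \<times> \<C>)"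
  have "countable \<D>"
    unfolding \<D>_def using \<B>(1) \<C>(1) by blast
  moreover have "\<forall>W\<in>\<D>. openin (prod_topology X Y) W"
    unfolding \<D>_def using \<B>(2) \<C>(2) by (auto simp: openin_prod_Times_iff)
  moreover have "\<exists>W\<in>\<D>. p \<in> W \<and> W \<subseteq> S"
    if S: "openin (prod_topology X Y) S" "p \<in> S" for S p
  proof -
    obtain x y where p: "p = (x, y)"
      by force
    obtain U V where UV: "openin X U" "openin Y V" "x \<in> U" "y \<in> V" "U \<times> V \<subseteq> S"
      using S p openin_prod_topology_alt by metis
    obtain U' where "U' \<in> \<B>" "x \<in> U'" "U' \<subseteq> U"
      using \<B>(3) UV by blast
    moreover obtain V' where "V' \<in> \<C>" "y \<in> V'" "V' \<subseteq> V"
      using \<C>(3) UV by blast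
    ultimately show ?thesis
      unfolding \<D>_def using p UV(5) by (intro bexI[of _ "U' \<times> V'"]) auto
  qed
  ultimately show ?thesis
    unfolding second_countable_def by blast
qed

text \<open>A compact metric space is second countable: balls of radius 1/(n+1) around the
  points of finite (1/(n+1))-nets form a countable base.\<close>

lemma (in Metric_space) compact_imp_second_countable:
  assumes "compact_space mtopology"
  shows "second_countable mtopology"
proof -
  have "mtotally_bounded M"
    using assms compactin_imp_mtotally_bounded by (simp add: compact_space_def)
  then have "\<forall>n::nat. \<exists>K. finite K \<and> K \<subseteq> M \<and> M \<subseteq> (\<Union>x\<in>K. mball x (1 / Suc n))"
    unfolding mtotally_bounded_def by simp
  then obtain K where K: "\<And>n. finite (K n)" "\<And>n. M \<subseteq> (\<Union>x\<in>K n. mball x (1 / Suc n))"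
    by metis
  define \<B> where "\<B> = (\<Union>n. (\<lambda>c. mball c (1 / Suc n)) ` K n)"
  have "countable \<B>"
    unfolding \<B>_def using K(1) by (auto intro: countable_finite)
  moreover have "\<forall>V\<in>\<B>. openin mtopology V"
    unfolding \<B>_def by auto
  moreover have "\<exists>V\<in>\<B>. x \<in> V \<and> V \<subseteq> U" if U: "openin mtopology U" "x \<in> U" for U x
  proof -
    obtain r where r: "r > 0" "mball x r \<subseteq> U"
      using U openin_mtopology by blast
    obtain n where "inverse (real (Suc n)) < r / 2"
      using reals_Archimedean[of "r/2"] r(1) by auto
    then have n: "1 / real (Suc n) < r / 2"
      by (simp add: inverse_eq_divide)
    have x: "x \<in> M"
      using U openin_mtopology by blast
    then obtain c where c: "c \<in> K n" "x \<in> mball c (1 / Suc n)"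
      using K(2)[of n] by blast
    have "mball c (1 / Suc n) \<subseteq> mball x r"
    proof
      fix y assume y: "y \<in> mball c (1 / Suc n)"
      have "d x y \<le> d x c + d c y"
        using c y by (intro triangle) auto
      also have "\<dots> < r"
        using c y n by (auto simp: commute)
      finally show "y \<in> mball x r"
        using x y by auto
    qed
    then show ?thesis
      using c r unfolding \<B>_def by blast
  qed
  ultimately show ?thesis
    unfolding second_countable_def by blast
qed

lemma compact_metrizable_imp_second_countable:
  "compact_space X \<Longrightarrow> metrizable_space X \<Longrightarrow> second_countable X"
  using Metric_space.compact_imp_second_countable unfolding metrizable_space_def by metis

lemma uncountable_nat_sets: "uncountable (UNIV :: nat set set)"
  by (metis Cantors_theorem Pow_UNIV UNIV_not_empty range_from_nat_into)

lemma generated_topology_neighbourhood_base: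
  assumes Int_closed: "\<And>S T. S \<in> \<B> \<Longrightarrow> T \<in> \<B> \<Longrightarrow> S \<inter> T \<in> \<B>"
    and "openin (topology_generated_by \<B>) U" "x \<in> U"
  shows "\<exists>V\<in>\<B>. x \<in> V \<and> V \<subseteq> U"
proof -
  have "generate_topology_on \<B> U"
    using assms(2) by (rule openin_topology_generated_by)
  then show ?thesis
    using assms(3)
  proof (induction arbitrary: x)
    case Empty
    then show ?case
      by simp
  next
    case (Int S T)
    obtain V where "V \<in> \<B>" "x \<in> V" "V \<subseteq> S"
      using Int.IH(1) Int.prems by blast
    moreover obtain W where "W \<in> \<B>" "x \<in> W" "W \<subseteq> T"
      using Int.IH(2) Int.prems by blast
    ultimately show ?case
      using Int_closed by (intro bexI[of _ "V \<inter> W"]) auto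
  next
    case (UN \<K>)
    then obtain K where "K \<in> \<K>" "x \<in> K"
      by blast
    then obtain V where "V \<in> \<B>" "x \<in> V" "V \<subseteq> K"
      using UN.IH by blast
    then show ?case
      using \<open>K \<in> \<K>\<close> by blast
  next
    case (Basis S)
    then show ?case
      by blast
  qed
qed


lemma openin_graph_topology_FG:
  "openin (prod_topology X euclideanreal) G \<Longrightarrow> openin (graph_topology X) (FG X G)"
  unfolding graph_topology_def by (rule topology_generated_by_Basis) blast

lemma FG_Int: "FG X (G \<inter> H) = FG X G \<inter> FG X H"
  by (auto simp: FG_def)

lemma graph_topology_neighbourhood_base:
  assumes "openin (graph_topology X) U" "h \<in> U"
  obtains G where "openin (prod_topology X euclideanreal) G" "h \<in> FG X G" "FG X G \<subseteq> U"
proof -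
  have "\<exists>V\<in>{FG X G | G. openin (prod_topology X euclideanreal) G}. h \<in> V \<and> V \<subseteq> U"
  proof (rule generated_topology_neighbourhood_base)
    show "S \<inter> T \<in> {FG X G | G. openin (prod_topology X euclideanreal) G}"
      if S: "S \<in> {FG X G | G. openin (prod_topology X euclideanreal) G}"
        and T: "T \<in> {FG X G | G. openin (prod_topology X euclideanreal) G}" for S T
    proof -
      obtain G H where "S = FG X G" "T = FG X H" "openin (prod_topology X euclideanreal) G"
        "openin (prod_topology X euclideanreal) H"
        using S T by blast
      then have "S \<inter> T = FG X (G \<inter> H)" "openin (prod_topology X euclideanreal) (G \<inter> H)"
        by (simp_all add: FG_Int openin_Int)
      then show ?thesis
        by blast
    qed
  qed (use assms in \<open>simp_all add: graph_topology_def\<close>)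
  then show ?thesis
    using that by blast
qed

lemma compactin_fgraph:
  assumes "compact_space X" "continuous_map X euclideanreal f"
  shows "compactin (prod_topology X euclideanreal) (fgraph X f)"
proof -
  have "compactin X (topspace X)"
    using assms(1) by (simp add: compact_space_def)
  moreover have "continuous_map X (prod_topology X euclideanreal) (\<lambda>x. (x, f x))"
    using assms(2) by (simp add: continuous_map_pairwise o_def)
  ultimately have "compactin (prod_topology X euclideanreal) ((\<lambda>x. (x, f x)) ` topspace X)"
    by (rule image_compactin)
  moreover have "fgraph X f = (\<lambda>x. (x, f x)) ` topspace X"
    by (auto simp: fgraph_def)
  ultimately show ?thesis
    by simp
qed


section \<open>Compact metrizable X gives a second countable graph topology\<close>

theorem compact_metrizable_imp_second_countable_graph_topology:
  assumes cpt: "compact_space X" and "metrizable_space X"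
  shows "second_countable (graph_topology X)"
proof -
  have "second_countable (prod_topology X euclideanreal)"
    using assms by (intro second_countable_prod_topology compact_metrizable_imp_second_countable
        second_countable_euclidean)
  then obtain \<B> where \<B>: "countable \<B>" "\<forall>B\<in>\<B>. openin (prod_topology X euclideanreal) B"
    "\<forall>G p. openin (prod_topology X euclideanreal) G \<and> p \<in> G \<longrightarrow> (\<exists>B\<in>\<B>. p \<in> B \<and> B \<subseteq> G)"
    unfolding second_countable_def by blast
  define \<F> where "\<F> = (\<lambda>\<A>. FG X (\<Union>\<A>)) ` {\<A>. finite \<A> \<and> \<A> \<subseteq> \<B>}"
  have "countable \<F>"
    unfolding \<F>_def using countable_Collect_finite_subset[OF \<B>(1)] by blast
  moreover have "\<forall>V\<in>\<F>. openin (graph_topology X) V"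
    unfolding \<F>_def using \<B>(2) by (auto intro!: openin_graph_topology_FG openin_Union)
  moreover have "\<exists>V\<in>\<F>. h \<in> V \<and> V \<subseteq> U" if U: "openin (graph_topology X) U" "h \<in> U" for U h
  proof -
    obtain G where G: "openin (prod_topology X euclideanreal) G" "h \<in> FG X G" "FG X G \<subseteq> U"
      using graph_topology_neighbourhood_base[OF U] by blast
    then obtain f where f: "continuous_map X euclideanreal f" "h = fgraph X f" and "h \<subseteq> G"
      by (auto simp: FG_def CX_def)
    text \<open>The compact graph is covered by finitely many basic sets contained in G.\<close>
    have "compactin (prod_topology X euclideanreal) h"
      using compactin_fgraph[OF cpt f(1)] f(2) by simp
    moreover have "\<And>B. B \<in> {B \<in> \<B>. B \<subseteq> G} \<Longrightarrow> openin (prod_topology X euclideanreal) B"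
      using \<B>(2) by blast
    moreover have "h \<subseteq> \<Union>{B \<in> \<B>. B \<subseteq> G}"
      using \<open>h \<subseteq> G\<close> \<B>(3) G(1) by blast
    ultimately obtain \<A> where \<A>: "finite \<A>" "\<A> \<subseteq> {B \<in> \<B>. B \<subseteq> G}" "h \<subseteq> \<Union>\<A>"
      by (meson compactinD)
    have "FG X (\<Union>\<A>) \<in> \<F>"
      unfolding \<F>_def using \<A> by blast
    moreover have "h \<in> FG X (\<Union>\<A>)"
      using G(2) \<A>(3) by (auto simp: FG_def)
    moreover have "FG X (\<Union>\<A>) \<subseteq> FG X G"
      using \<A>(2) unfolding FG_def by blast
    then have "FG X (\<Union>\<A>) \<subseteq> U"
      using G(3) by blast
    ultimately show ?thesis
      by blast
  qed
  ultimately show ?thesis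
    unfolding second_countable_def by blast
qed


section \<open>The ccc graph topology forces X to be compact and metrizable\<close>

definition separated_on :: "'a set \<Rightarrow> real \<Rightarrow> ('a \<Rightarrow> real) set \<Rightarrow> bool" where
  "separated_on A c F \<longleftrightarrow> (\<forall>f\<in>F. \<forall>g\<in>F. f \<noteq> g \<longrightarrow> (\<exists>x\<in>A. c \<le> \<bar>f x - g x\<bar>))"

lemma separated_onD:
  "separated_on A c F \<Longrightarrow> f \<in> F \<Longrightarrow> g \<in> F \<Longrightarrow> f \<noteq> g \<Longrightarrow> \<exists>x\<in>A. c \<le> \<bar>f x - g x\<bar>"
  unfolding separated_on_def by blast

definition graph_tube :: "'a topology \<Rightarrow> ('a \<Rightarrow> real) \<Rightarrow> real \<Rightarrow> ('a \<times> real) set" where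
  "graph_tube X f r = {(x, y). x \<in> topspace X \<and> \<bar>y - f x\<bar> < r}"

lemma openin_graph_tube:
  assumes "continuous_map X euclideanreal f"
  shows "openin (prod_topology X euclideanreal) (graph_tube X f r)"
proof -
  have "continuous_map (prod_topology X euclideanreal) euclideanreal (\<lambda>p. \<bar>snd p - f (fst p)\<bar>)"
    using assms by (intro continuous_map_real_abs continuous_map_diff continuous_map_snd
        continuous_map_compose[OF continuous_map_fst, unfolded o_def])
  then have "openin (prod_topology X euclideanreal)
      {p \<in> topspace (prod_topology X euclideanreal). \<bar>snd p - f (fst p)\<bar> \<in> {..<r}}"
    by (rule openin_continuous_map_preimage) auto
  then show ?thesis
    by (simp add: graph_tube_def case_prod_unfold Collect_conj_eq[symmetric] mem_Times_iff)
qed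

lemma fgraph_in_FG_graph_tube:
  "continuous_map X euclideanreal f \<Longrightarrow> r > 0 \<Longrightarrow> fgraph X f \<in> FG X (graph_tube X f r)"
  by (auto simp: FG_def CX_def graph_tube_def fgraph_def)

lemma FG_graph_tubes_disjoint:
  assumes "x \<in> topspace X" "c \<le> \<bar>f x - g x\<bar>"
  shows "FG X (graph_tube X f (c/2)) \<inter> FG X (graph_tube X g (c/2)) = {}"
proof (rule ccontr)
  assume "FG X (graph_tube X f (c/2)) \<inter> FG X (graph_tube X g (c/2)) \<noteq> {}"
  then obtain k where "fgraph X k \<subseteq> graph_tube X f (c/2)" "fgraph X k \<subseteq> graph_tube X g (c/2)"
    by (auto simp: FG_def CX_def)
  moreover have "(x, k x) \<in> fgraph X k"
    using assms(1) by (auto simp: fgraph_def)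
  ultimately have "\<bar>k x - f x\<bar> < c/2" "\<bar>k x - g x\<bar> < c/2"
    by (auto simp: graph_tube_def)
  then show False
    using assms(2) by linarith
qed

lemma ccc_separated_countable:
  assumes ccc: "ccc_space (graph_topology X)" and "c > 0"
    and cont: "\<And>f. f \<in> F \<Longrightarrow> continuous_map X euclideanreal f"
    and sep: "separated_on (topspace X) c F"
  shows "countable F"
proof -
  define N where "N f = FG X (graph_tube X f (c/2))" for f
  have graph_in: "fgraph X f \<in> N f" if "f \<in> F" for f
    unfolding N_def using cont[OF that] \<open>c > 0\<close> by (simp add: fgraph_in_FG_graph_tube)
  have disjoint: "N f \<inter> N g = {}" if fg: "f \<in> F" "g \<in> F" "f \<noteq> g" for f g
  proof -
    obtain x where "x \<in> topspace X" "c \<le> \<bar>f x - g x\<bar>"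
      using separated_onD[OF sep fg] by blast
    then show ?thesis
      unfolding N_def by (rule FG_graph_tubes_disjoint)
  qed
  have "inj_on N F"
  proof (rule inj_onI, rule ccontr)
    fix f g assume "f \<in> F" "g \<in> F" "N f = N g" "f \<noteq> g"
    then show False
      using disjoint[of f g] graph_in[of f] by auto
  qed
  moreover have "countable (N ` F)"
  proof -
    have "openin (graph_topology X) (N f)" if "f \<in> F" for f
      unfolding N_def using cont[OF that] by (intro openin_graph_topology_FG openin_graph_tube)
    then have "\<forall>U\<in>N ` F. openin (graph_topology X) U \<and> U \<noteq> {}"
      using graph_in by blast
    moreover have "pairwise disjnt (N ` F)"
      using disjoint unfolding pairwise_def disjnt_def by auto
    ultimately show ?thesis
      using ccc unfolding ccc_space_def by blast
  qed
  ultimately show ?thesis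
    using countable_image_inj_on by blast
qed

text \<open>By Zorn's lemma every set S of functions has a maximal c-separated subset; maximality
  means that it is c-dense in S for the sup distance over A.\<close>

lemma maximal_separated_subset:
  fixes S :: "('a \<Rightarrow> real) set"
  assumes "c > 0"
  obtains M where "M \<subseteq> S" "separated_on A c M"
    "\<And>g. g \<in> S \<Longrightarrow> \<exists>f\<in>M. \<forall>x\<in>A. \<bar>f x - g x\<bar> < c"
proof -
  define P where "P M \<longleftrightarrow> M \<subseteq> S \<and> separated_on A c M" for M
  have "\<exists>M\<in>Collect P. \<forall>Y\<in>Collect P. M \<subseteq> Y \<longrightarrow> Y = M"
  proof (rule Zorn_Lemma, intro ballI)
    fix \<C> assume "\<C> \<in> chains (Collect P)"
    then have P: "\<And>M. M \<in> \<C> \<Longrightarrow> P M" and chain: "\<And>M M'. M \<in> \<C> \<Longrightarrow> M' \<in> \<C> \<Longrightarrow> M \<subseteq> M' \<or> M' \<subseteq> M"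
      by (auto simp: chains_def chain_subset_def)
    text \<open>Two members of the union already lie in a common member of the chain.\<close>
    have "separated_on A c (\<Union>\<C>)"
      unfolding separated_on_def
    proof (intro ballI impI)
      fix f g assume "f \<in> \<Union>\<C>" "g \<in> \<Union>\<C>" "f \<noteq> g"
      then obtain M M' where "M \<in> \<C>" "M' \<in> \<C>" "f \<in> M" "g \<in> M'"
        by blast
      then show "\<exists>x\<in>A. c \<le> \<bar>f x - g x\<bar>"
        using chain[of M M'] P \<open>f \<noteq> g\<close> unfolding P_def separated_on_def by blast
    qed
    then show "\<Union>\<C> \<in> Collect P"
      using P unfolding P_def by blast
  qed
  then obtain M where PM: "P M" and max: "\<And>Y. P Y \<Longrightarrow> M \<subseteq> Y \<Longrightarrow> Y = M"
    by blast
  have "\<exists>f\<in>M. \<forall>x\<in>A. \<bar>f x - g x\<bar> < c" if g: "g \<in> S" for g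
  proof (cases "g \<in> M")
    case True
    then show ?thesis
      using \<open>c > 0\<close> by force
  next
    case False
    then have "\<not> P (insert g M)"
      using max[of "insert g M"] by auto
    then show ?thesis
      using PM g unfolding P_def separated_on_def
      by (auto simp: not_le abs_minus_commute)
  qed
  then show ?thesis
    using that PM unfolding P_def by blast
qed

definition separates_points_from_closed :: "'a topology \<Rightarrow> ('a \<Rightarrow> real) set \<Rightarrow> bool" where
  "separates_points_from_closed X M \<longleftrightarrow>
     (\<forall>U x. openin X U \<and> x \<in> U \<longrightarrow> (\<exists>f\<in>M. \<exists>r. f x < r \<and> (\<forall>y\<in>topspace X - U. r \<le> f y)))"

text \<open>On a completely regular space, any family that is (1/2)-dense in C(X) approximates
  Urysohn functions well enough to separate points from closed sets.\<close>

lemma dense_family_separates_points_from_closed: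
  assumes cr: "completely_regular_space X"
    and dense: "\<And>g. continuous_map X euclideanreal g \<Longrightarrow> \<exists>f\<in>M. \<forall>x\<in>topspace X. \<bar>f x - g x\<bar> < 1/2"
  shows "separates_points_from_closed X M"
  unfolding separates_points_from_closed_def
proof (intro allI impI)
  fix U x assume U: "openin X U \<and> x \<in> U"
  then have x: "x \<in> topspace X - (topspace X - U)"
    using openin_subset by fastforce
  obtain g :: "_ \<Rightarrow> real" where g: "continuous_map X (top_of_set {0..1}) g" "g x = 0"
    "g ` (topspace X - U) \<subseteq> {1}"
    using cr U x unfolding completely_regular_space_def by (meson closedin_diff closedin_topspace)
  then obtain f where f: "f \<in> M" "\<forall>y\<in>topspace X. \<bar>f y - g y\<bar> < 1/2"
    using dense by (metis continuous_map_in_subtopology)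
  then have "f x < 1/2" "\<forall>y\<in>topspace X - U. 1/2 \<le> f y"
    using x g(2,3) by (force, fastforce)
  then show "\<exists>f\<in>M. \<exists>r. f x < r \<and> (\<forall>y\<in>topspace X - U. r \<le> f y)"
    using f(1) by blast
qed

lemma evaluation_open_map:
  assumes sep: "separates_points_from_closed X M"
  defines "e \<equiv> \<lambda>x. \<lambda>f\<in>M. f x"
  shows "open_map X (subtopology (product_topology (\<lambda>_. euclideanreal) M) (e ` topspace X)) e"
  unfolding open_map_def
proof (intro allI impI)
  fix U assume U: "openin X U"
  obtain \<phi> r where \<phi>: "\<And>x. x \<in> U \<Longrightarrow> \<phi> x \<in> M \<and> \<phi> x x < r x \<and> (\<forall>y\<in>topspace X - U. r x \<le> \<phi> x y)"
    using sep U unfolding separates_points_from_closed_def by metis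
  define W where "W x = PiE M (\<lambda>f. if f = \<phi> x then {..<r x} else UNIV)" for x
  have "openin (product_topology (\<lambda>_. euclideanreal) M) (W x)" for x
  proof -
    have "finite {f \<in> M. (if f = \<phi> x then {..<r x} else UNIV) \<noteq> topspace euclideanreal}"
      by (rule finite_subset[of _ "{\<phi> x}"]) auto
    then show ?thesis
      unfolding W_def openin_PiE_gen by auto
  qed
  then have "openin (product_topology (\<lambda>_. euclideanreal) M) (\<Union>x\<in>U. W x)"
    by blast
  moreover have "e ` U = (\<Union>x\<in>U. W x) \<inter> e ` topspace X"
  proof
    show "e ` U \<subseteq> (\<Union>x\<in>U. W x) \<inter> e ` topspace X"
      using \<phi> U openin_subset by (fastforce simp: W_def e_def PiE_iff)
    show "(\<Union>x\<in>U. W x) \<inter> e ` topspace X \<subseteq> e ` U"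
    proof
      fix z assume "z \<in> (\<Union>x\<in>U. W x) \<inter> e ` topspace X"
      then obtain x y where xy: "x \<in> U" "z \<in> W x" "y \<in> topspace X" "z = e y"
        by blast
      then have "\<phi> x y < r x"
        using \<phi>[OF xy(1)] by (auto simp: W_def e_def PiE_iff)
      then have "y \<in> U"
        using \<phi>[OF xy(1)] xy(3) by force
      then show "z \<in> e ` U"
        using xy by blast
    qed
  qed
  ultimately show "openin (subtopology (product_topology (\<lambda>_. euclideanreal) M) (e ` topspace X)) (e ` U)"
    unfolding openin_subtopology by blast
qed

text \<open>A T1 space with a countable family of continuous functions separating points from
  closed sets embeds into the metrizable space \<real>^M, hence is metrizable.\<close>

lemma separating_family_imp_metrizable:
  assumes t1: "t1_space X" and "countable M"
    and cont: "\<And>f. f \<in> M \<Longrightarrow> continuous_map X euclideanreal f"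
    and sep: "separates_points_from_closed X M"
  shows "metrizable_space X"
proof -
  define Y where "Y = product_topology (\<lambda>_. euclideanreal) M"
  define e where "e x = (\<lambda>f\<in>M. f x)" for x
  define Z where "Z = subtopology Y (e ` topspace X)"
  have "continuous_map X Y e"
    unfolding Y_def continuous_map_componentwise e_def using cont by auto
  then have "continuous_map X Z e"
    unfolding Z_def by (simp add: continuous_map_in_subtopology)
  moreover have "open_map X Z e"
    unfolding Z_def Y_def e_def using sep by (rule evaluation_open_map)
  moreover have "inj_on e (topspace X)"
  proof (rule inj_onI, rule ccontr)
    fix x y assume xy: "x \<in> topspace X" "y \<in> topspace X" "e x = e y" "x \<noteq> y"
    have "openin X (topspace X - {y})"
      using t1 xy by (simp add: t1_space_closedin_singleton closedin_def)
    then obtain f r where "f \<in> M" "f x < r" "r \<le> f y"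
      using sep xy unfolding separates_points_from_closed_def by blast
    then show False
      using xy(3) unfolding e_def by (metis not_le restrict_apply')
  qed
  ultimately have "embedding_map X Z e"
    by (rule injective_open_imp_embedding_map)
  moreover have "metrizable_space Y"
    unfolding Y_def metrizable_space_product_topology
    using \<open>countable M\<close> by (simp add: metrizable_space_euclidean)
  then have "metrizable_space (subtopology Z (e ` topspace X))"
    unfolding Z_def by (intro metrizable_space_subtopology)
  ultimately show ?thesis
    using embedding_map_imp_homeomorphic_space homeomorphic_metrizable_space by blast
qed

text \<open>A non-compact metrizable space contains an infinite closed discrete set; the Tietze
  extensions of the indicator functions of its subsets form a 1-separated family indexed
  injectively by the uncountably many sets of natural numbers.\<close>

lemma noncompact_metrizable_separated_family:
  assumes met: "metrizable_space X" and nc: "\<not> compact_space X"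
  obtains G :: "nat set \<Rightarrow> 'a \<Rightarrow> real"
  where "inj G" "\<And>B. continuous_map X euclideanreal (G B)"
    "separated_on (topspace X) 1 (range G)"
proof -
  obtain Ms d where md: "Metric_space Ms d" "X = Metric_space.mtopology Ms d"
    using met unfolding metrizable_space_def by blast
  obtain S where S: "S \<subseteq> topspace X" "infinite S" "X derived_set_of S = {}"
    using nc Metric_space.compact_space_eq_Bolzano_Weierstrass[OF md(1)] md(2)
      Metric_space.topspace_mtopology[OF md(1)] by auto
  have closed: "closedin X S"
    using S by (simp add: closedin_contains_derived_set)
  have discrete: "subtopology X S = discrete_topology S"
    using S by (simp add: subtopology_eq_discrete_topology_eq)
  obtain \<sigma> :: "nat \<Rightarrow> _" where \<sigma>: "inj \<sigma>" "range \<sigma> \<subseteq> S"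
    using infinite_countable_subset S(2) by blast
  have "\<exists>g. continuous_map X euclideanreal g \<and> (\<forall>x\<in>S. g x = indicator (\<sigma> ` B) x)" for B
  proof -
    have "continuous_map (subtopology X S) euclideanreal (indicator (\<sigma> ` B))"
      by (simp add: discrete)
    moreover have "indicator (\<sigma> ` B) ` S \<subseteq> {0..1::real}"
      by (auto simp: indicator_def)
    ultimately obtain g where "continuous_map X euclideanreal g"
      "\<And>x. x \<in> S \<Longrightarrow> g x = indicator (\<sigma> ` B) x"
      by (rule Tietze_extension_closed_real_interval[OF metrizable_imp_normal_space[OF met] closed])
        auto
    then show ?thesis
      by blast
  qed
  then obtain G where G: "\<And>B. continuous_map X euclideanreal (G B)"
    "\<And>B x. x \<in> S \<Longrightarrow> G B x = indicator (\<sigma> ` B) x"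
    by metis
  have differ: "\<exists>x\<in>topspace X. 1 \<le> \<bar>G B x - G B' x\<bar>" if "B \<noteq> B'" for B B'
  proof -
    obtain n where n: "n \<in> B \<longleftrightarrow> n \<notin> B'"
      using \<open>B \<noteq> B'\<close> by blast
    have "\<sigma> n \<in> S"
      using \<sigma>(2) by blast
    then have "1 \<le> \<bar>G B (\<sigma> n) - G B' (\<sigma> n)\<bar>"
      using n \<sigma>(1) G(2) by (auto simp: indicator_def inj_image_mem_iff)
    then show ?thesis
      using \<open>\<sigma> n \<in> S\<close> S(1) by blast
  qed
  have "inj G"
  proof (rule injI, rule ccontr)
    fix B B' assume "G B = G B'" "B \<noteq> B'"
    then show False
      using differ[of B B'] by auto
  qed
  moreover have "separated_on (topspace X) 1 (range G)"
    unfolding separated_on_def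
  proof (intro ballI impI)
    fix f g assume "f \<in> range G" "g \<in> range G" "f \<noteq> g"
    then obtain B B' where "f = G B" "g = G B'" "B \<noteq> B'"
      by blast
    then show "\<exists>x\<in>topspace X. 1 \<le> \<bar>f x - g x\<bar>"
      using differ by blast
  qed
  ultimately show ?thesis
    using that G(1) by blast
qed

theorem ccc_graph_topology_imp_compact_metrizable:
  assumes "tychonoff_space X" and ccc: "ccc_space (graph_topology X)"
  shows "compact_space X \<and> metrizable_space X"
proof -
  obtain M where M: "M \<subseteq> {f. continuous_map X euclideanreal f}" "separated_on (topspace X) (1/2) M"
    "\<And>g. continuous_map X euclideanreal g \<Longrightarrow> \<exists>f\<in>M. \<forall>x\<in>topspace X. \<bar>f x - g x\<bar> < 1/2"
    using maximal_separated_subset[of "1/2" "{f. continuous_map X euclideanreal f}" "topspace X"]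
    by auto
  have "countable M"
    using ccc_separated_countable[OF ccc _ _ M(2)] M(1) by auto
  then have met: "metrizable_space X"
    using assms(1) M dense_family_separates_points_from_closed separating_family_imp_metrizable
    unfolding tychonoff_space_def by blast
  have "compact_space X"
  proof (rule ccontr)
    assume "\<not> compact_space X"
    then obtain G :: "nat set \<Rightarrow> _" where "inj G" "\<And>B. continuous_map X euclideanreal (G B)"
      "separated_on (topspace X) 1 (range G)"
      using noncompact_metrizable_separated_family[OF met] by blast
    then have "countable (UNIV :: nat set set)"
      using ccc_separated_countable[OF ccc, of 1 "range G"] countable_image_inj_on by auto
    then show False
      using uncountable_nat_sets by blast
  qed
  then show ?thesis
    using met by blast
qed


theorem proposition2p2:
  fixes X :: "'a topology"
  assumes "tychonoff_space X"
  shows "(second_countable (graph_topology X) \<longleftrightarrow> compact_space X \<and> metrizable_space X)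
       \<and> (has_countable_network (graph_topology X) \<longleftrightarrow> compact_space X \<and> metrizable_space X)
       \<and> (separable_space (graph_topology X) \<longleftrightarrow> compact_space X \<and> metrizable_space X)
       \<and> (ccc_space (graph_topology X) \<longleftrightarrow> compact_space X \<and> metrizable_space X)"
proof -
  let ?cm = "compact_space X \<and> metrizable_space X"
  let ?T = "graph_topology X"
  have "?cm \<Longrightarrow> second_countable ?T"
    by (blast intro: compact_metrizable_imp_second_countable_graph_topology)
  moreover have "second_countable ?T \<Longrightarrow> has_countable_network ?T"
    by (rule second_countable_imp_countable_network)
  moreover have "has_countable_network ?T \<Longrightarrow> separable_space ?T"
    by (rule countable_network_imp_separable)
  moreover have "separable_space ?T \<Longrightarrow> ccc_space ?T"
    by (rule separable_imp_ccc)
  moreover have "ccc_space ?T \<Longrightarrow> ?cm"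
    using assms by (rule ccc_graph_topology_imp_compact_metrizable)
  ultimately show ?thesis
    by blast
qed

end
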